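(* For every simplicial complex $\Delta$ on a finite vertex set $[m]$ one has $f_d(\mathrm{Inc}(\Delta))\ge\mathrm{Inc}^{[d+1]}(f_d(\Delta))$ for all $d\ge0$.
   Context: $\mathbb{N}=\{1,2,3,\dots\}$, $[m]=\{1,\dots,m\}$. A simplicial complex on $[m]$ is a collection of subsets of $[m]$ closed under taking subsets. For $d\ge1$, $F_d(\Delta)$ is the set of $d$-element faces, viewed in $\binom{\mathbb{N}}{d}$ (the $d$-subsets of $\mathbb{N}$, written $\mathbf{u}=(u_1,\dots,u_d)$ with $u_1<\cdots<u_d$), and $f_{d-1}(\Delta)=|F_d(\Delta)|$. $\mathrm{Inc}_1$ is the set of maps $\pi\colon\mathbb{N}\to\mathbb{N}$ with $\pi(j)<\pi(j+1)$ and $\pi(j)\le j+1$ for all $j$, acting by $\pi(\mathbf{u})=(\pi(u_1),\ldots,\pi(u_d))$; $\mathrm{Inc}(\mathcal{F})=\{\pi(\mathbf{u})\mid\mathbf{u}\in\mathcal{F},\pi\in\mathrm{Inc}_1\}$ and $\mathrm{Inc}(\Delta)=\bigcup_{d\ge1}\mathrm{Inc}(F_d(\Delta))$ (together with the empty face). Every positive integer $n$ has a unique $e$-binomial representation $n=\binom{a_e}{e}+\binom{a_{e-1}}{e-1}+\cdots+\binom{a_s}{s}$ with $a_e>a_{e-1}>\cdots>a_s\ge s\ge1$; then $\mathrm{Inc}^{[e]}(n)=\binom{a_e+1}{e}+\binom{a_{e-1}+1}{e-1}+\cdots+\binom{a_s+1}{s}$, and $\mathrm{Inc}^{[e]}(0)=0$.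 *)

theory Defs
  imports Main
begin

definition simplicial_complex :: "nat \<Rightarrow> nat set set \<Rightarrow> bool" where
  "simplicial_complex m \<Delta> \<longleftrightarrow>
     (\<forall>F\<in>\<Delta>. F \<subseteq> {1..m}) \<and> (\<forall>F\<in>\<Delta>. \<forall>G. G \<subseteq> F \<longrightarrow> G \<in> \<Delta>)"

definition faces :: "nat \<Rightarrow> nat set set \<Rightarrow> nat set set" where
  "faces d \<Delta> = {F \<in> \<Delta>. card F = d}"

text \<open>f_{d-1}(Delta) = |F_d(Delta)|, i.e. fvec d Delta = f_d(Delta) = |F_{d+1}(Delta)|.\<close>
definition fvec :: "nat \<Rightarrow> nat set set \<Rightarrow> nat" where
  "fvec d \<Delta> = card (faces (d + 1) \<Delta>)"

text \<open>Inc_1: maps pi : N -> N (N = {1,2,...}) with pi(j) < pi(j+1) and pi(j) \<le> j+1.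
  Only the values on positive arguments matter.\<close>
definition Inc1 :: "(nat \<Rightarrow> nat) set" where
  "Inc1 = {\<pi>. \<forall>j\<ge>1. 1 \<le> \<pi> j \<and> \<pi> j < \<pi> (Suc j) \<and> \<pi> j \<le> j + 1}"

definition IncF :: "nat set set \<Rightarrow> nat set set" where
  "IncF \<F> = {\<pi> ` u | u \<pi>. u \<in> \<F> \<and> \<pi> \<in> Inc1}"

definition IncCx :: "nat set set \<Rightarrow> nat set set" where
  "IncCx \<Delta> = (\<Union>d\<in>{1..}. IncF (faces d \<Delta>)) \<union> {{}}"

definition binrep :: "nat \<Rightarrow> nat \<Rightarrow> nat \<Rightarrow> (nat \<Rightarrow> nat) \<Rightarrow> bool" where
  "binrep e n s a \<longleftrightarrow> 1 \<le> s \<and> s \<le> e \<and> (\<forall>i\<in>{s..<e}. a i < a (Suc i)) \<and> s \<le> a s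
     \<and> n = (\<Sum>i=s..e. a i choose i)"

definition IncBin :: "nat \<Rightarrow> nat \<Rightarrow> nat" where
  "IncBin e n = (if n = 0 then 0 else
     (THE v. \<exists>s a. binrep e n s a \<and> v = (\<Sum>i=s..e. (a i + 1) choose i)))"

end

theory Submission
  imports Defs "HOL-Library.Product_Lexorder"
begin

text \<open>Encode a \<open>d\<close>-subset of \<open>\<nat>\<close> by its vector of gaps in \<open>\<nat>\<^sup>d\<close>. An \<open>Inc\<^sub>1\<close> map that
  skips a single value raises one gap by one, so \<open>F\<^sub>d(Inc(\<Delta>))\<close> contains the image of
  \<open>B \<union> {b + e\<^sub>i}\<close>, where \<open>B\<close> encodes \<open>F\<^sub>d(\<Delta>)\<close>. It therefore suffices to show
  \<open>|B \<union> {b + e\<^sub>i}| \<ge> Inc\<^sup>[\<^sup>e\<^sup>](|B|)\<close> for every finite \<open>B \<subseteq> \<nat>\<^sup>e\<close>. This is proved by induction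
  on \<open>e\<close> and \<open>|B|\<close>: compressing \<open>B\<close> along \<open>e\<^sub>0\<close> or \<open>e\<^sub>0 - e\<^sub>i\<close> does not enlarge
  \<open>B \<union> {b + e\<^sub>i}\<close> and lowers the sum of the first coordinates, and a compressed \<open>B\<close> splits
  into the layer \<open>b\<^sub>0 = 0\<close> and its part with \<open>b\<^sub>0 > 0\<close> shifted down, which reduces the
  claim to a numerical inequality for \<open>Inc\<^sup>[\<^sup>e\<^sup>](n) - n\<close>.\<close>

section \<open>Binomial representations\<close>

definition binomial_top :: "nat \<Rightarrow> nat \<Rightarrow> nat" where
  "binomial_top e n = (GREATEST a. a choose e \<le> n)"

text \<open>\<open>inc_excess e n = Inc\<^sup>[\<^sup>e\<^sup>](n) - n\<close>, computed greedily from the leading term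
  of the \<open>e\<close>-binomial representation of \<open>n\<close>.\<close>
primrec inc_excess :: "nat \<Rightarrow> nat \<Rightarrow> nat" where
  "inc_excess 0 n = 0"
| "inc_excess (Suc d) n = (if n = 0 then 0 else
      (binomial_top (Suc d) n choose d)
      + inc_excess d (n - (binomial_top (Suc d) n choose Suc d)))"

declare inc_excess.simps(2) [simp del]

lemma binomial_top_eqI:
  assumes "a choose e \<le> n" "n < Suc a choose e"
  shows "binomial_top e n = a"
  unfolding binomial_top_def
proof (rule Greatest_equality)
  fix b assume "b choose e \<le> n"
  with assms(2) have "\<not> Suc a \<le> b"
    using binomial_right_mono[of "Suc a" b e] by linarith
  then show "b \<le> a" by simp
qed (fact assms(1))

lemma Suc_le_choose_add: "Suc n \<le> (n + Suc e) choose Suc e"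
proof (induction e)
  case (Suc e)
  then show ?case by simp
qed simp

lemma binomial_bracket:
  assumes "1 \<le> n"
  obtains a where "a choose Suc d \<le> n" "n < Suc a choose Suc d" "Suc d \<le> a"
proof -
  have ex: "\<exists>a. n < a choose Suc d"
    using Suc_le_choose_add[of n d] by (intro exI[of _ "n + Suc d"]) simp
  define a' where "a' = (LEAST a. n < a choose Suc d)"
  have above: "n < a' choose Suc d" unfolding a'_def using ex by (rule LeastI_ex)
  then obtain a where a: "a' = Suc a" by (cases a') auto
  then have "\<not> n < a choose Suc d" unfolding a'_def by (metis lessI not_less_Least)
  then have below: "a choose Suc d \<le> n" by simp
  have "Suc d \<le> a"
  proof (rule ccontr)
    assume "\<not> Suc d \<le> a"
    then have "Suc a choose Suc d \<le> 1" by (cases "a = d") (auto simp: binomial_eq_0)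
    with above a assms show False by simp
  qed
  with that below above a show thesis by blast
qed

lemma inc_excess_0 [simp]: "inc_excess e 0 = 0"
  by (cases e) (auto simp: inc_excess.simps(2))

lemma inc_excess_Suc_eq:
  assumes "1 \<le> n" "a choose Suc d \<le> n" "n < Suc a choose Suc d"
  shows "inc_excess (Suc d) n = (a choose d) + inc_excess d (n - (a choose Suc d))"
  using assms binomial_top_eqI[OF assms(2,3)] by (simp add: inc_excess.simps(2))

lemma inc_excess_choose:
  assumes "d \<le> a"
  shows "(a choose d) + inc_excess d (a choose d) = Suc a choose d"
proof (cases d)
  case (Suc d')
  have pos: "0 < a choose d'" "0 < a choose d" using assms Suc by simp_all
  have "inc_excess d (a choose d) = a choose d'"
    using inc_excess_Suc_eq[of "a choose d" a d'] pos Suc by (simp add: Suc_le_eq)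
  then show ?thesis using Suc by simp
qed simp

lemma inc_excess_le_Suc: "inc_excess e n \<le> inc_excess e (Suc n)"
proof (induction e arbitrary: n)
  case (Suc d)
  have mono: "inc_excess d p \<le> inc_excess d q" if "p \<le> q" for p q
    using lift_Suc_mono_le[of "inc_excess d", OF Suc.IH that] .
  show ?case
  proof (cases "n = 0")
    case False
    then obtain a where a: "a choose Suc d \<le> n" "n < Suc a choose Suc d" "Suc d \<le> a"
      using binomial_bracket[of n d] by auto
    have excess_n: "inc_excess (Suc d) n = (a choose d) + inc_excess d (n - (a choose Suc d))"
      using inc_excess_Suc_eq[OF _ a(1,2)] False by simp
    show ?thesis
    proof (cases "Suc n < Suc a choose Suc d")
      case True
      then show ?thesis using excess_n inc_excess_Suc_eq[of "Suc n" a d] a mono by simp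
    next
      case False
      then have top: "Suc n = Suc a choose Suc d" using a(2) by simp
      have "inc_excess d (n - (a choose Suc d)) \<le> inc_excess d (a choose d)"
        using top by (intro mono) simp
      moreover have "(a choose d) + inc_excess d (a choose d) = Suc a choose d"
        using a(3) by (intro inc_excess_choose) simp
      moreover have "inc_excess (Suc d) (Suc n) = Suc a choose d"
        using inc_excess_choose[of "Suc d" "Suc a"] top a(3) by simp
      ultimately show ?thesis using excess_n by linarith
    qed
  qed simp
qed simp

lemma mono_inc_excess: "p \<le> q \<Longrightarrow> inc_excess e p \<le> inc_excess e q"
  using lift_Suc_mono_le[of "inc_excess e", OF inc_excess_le_Suc] .

lemma inc_excess_1: "inc_excess (Suc 0) n = (if n = 0 then 0 else 1)"
  by (simp add: inc_excess.simps(2))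

text \<open>The induction step of \<open>inc_excess_add_le\<close> when \<open>x\<close> is below the coefficient
  \<open>C(a + 1, d + 1)\<close> attached to the leading term \<open>C(a + 1, d + 2)\<close> of \<open>x + y\<close>.\<close>
lemma inc_excess_add_le_below:
  assumes IH: "\<And>x y. inc_excess (Suc d) y \<le> x \<Longrightarrow> inc_excess (Suc d) (x + y) \<le> x + inc_excess d x"
    and hyp: "inc_excess (Suc (Suc d)) y \<le> x"
    and above: "Suc a choose Suc (Suc d) \<le> x + y"
    and x_below: "x < Suc a choose Suc d"
    and y_below: "y < Suc a choose Suc (Suc d)"
  shows "(Suc a choose Suc d) + inc_excess (Suc d) (x + y - (Suc a choose Suc (Suc d)))
           \<le> x + inc_excess (Suc d) x"
proof -
  let ?r = "x + y - (Suc a choose Suc (Suc d))"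
  have excess_x: "inc_excess (Suc d) x = (a choose d) + inc_excess d (x - (a choose Suc d))"
    if "a choose Suc d \<le> x" using that above y_below x_below
    by (intro inc_excess_Suc_eq) auto
  show ?thesis
  proof (cases "1 \<le> y \<and> a choose Suc (Suc d) \<le> y")
    case True
    have "inc_excess (Suc (Suc d)) y
            = (a choose Suc d) + inc_excess (Suc d) (y - (a choose Suc (Suc d)))"
      using True y_below by (intro inc_excess_Suc_eq) auto
    with hyp have x_above: "a choose Suc d \<le> x"
      and "inc_excess (Suc d) (y - (a choose Suc (Suc d))) \<le> x - (a choose Suc d)" by auto
    from IH[OF this(2)] have "inc_excess (Suc d) ?r
        \<le> x - (a choose Suc d) + inc_excess d (x - (a choose Suc d))"
      using True x_above above by (simp add: add.commute)
    then show ?thesis using excess_x[OF x_above] x_above by simp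
  next
    case False
    then have y_low: "y \<le> a choose Suc (Suc d)" by auto
    then have x_above: "a choose Suc d \<le> x" using above by simp
    have "inc_excess (Suc d) ?r \<le> inc_excess (Suc d) (x - (a choose Suc d))"
      using y_low above by (intro mono_inc_excess) simp
    also have "\<dots> \<le> x - (a choose Suc d) + inc_excess d (x - (a choose Suc d))"
      using IH[of 0 "x - (a choose Suc d)"] by simp
    finally show ?thesis using excess_x[OF x_above] x_above by simp
  qed
qed

lemma inc_excess_add_le:
  "inc_excess (Suc d) y \<le> x \<Longrightarrow> inc_excess (Suc d) (x + y) \<le> x + inc_excess d x"
proof (induction d arbitrary: x y)
  case 0
  then show ?case by (simp add: inc_excess_1 split: if_splits)
next
  case (Suc d)
  let ?e = "Suc (Suc d)" and ?r = "\<lambda>a. x + y - (a choose Suc (Suc d))"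
  show ?case
  proof (cases "x + y = 0")
    case False
    obtain a where a: "a choose ?e \<le> x + y" "x + y < Suc a choose ?e" "?e \<le> a"
      by (rule binomial_bracket[of "x + y" "Suc d"]) (use False in auto)
    have excess: "inc_excess ?e (x + y) = (a choose Suc d) + inc_excess (Suc d) (?r a)"
      using False a by (intro inc_excess_Suc_eq) auto
    have y_below: "y < a choose ?e"
    proof (rule ccontr)
      assume y_above: "\<not> y < a choose ?e"
      moreover have "0 < a choose ?e" using a(3) by (rule zero_less_binomial)
      ultimately have "inc_excess ?e y = (a choose Suc d) + inc_excess (Suc d) (y - (a choose ?e))"
        using a(2) by (intro inc_excess_Suc_eq) linarith+
      then have "a choose Suc d \<le> x" using Suc.prems by simp
      moreover have "?r a < a choose Suc d" using a(1,2) by simp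
      ultimately show False using y_above by linarith
    qed
    show ?thesis
    proof (cases "a choose Suc d \<le> x")
      case True
      have "inc_excess (Suc d) (?r a) \<le> inc_excess (Suc d) x"
        using y_below by (intro mono_inc_excess) simp
      then show ?thesis using excess True by simp
    next
      case False
      obtain a' where a': "a = Suc a'" using a(3) by (cases a) auto
      show ?thesis
        using inc_excess_add_le_below[OF Suc.IH Suc.prems, of a'] excess a(1) y_below False a'
        by simp
    qed
  qed simp
qed

lemma binrep_cong: "(\<And>i. i \<le> e \<Longrightarrow> a i = b i) \<Longrightarrow> binrep e n s a = binrep e n s b"
  unfolding binrep_def by (smt (verit) atLeastAtMost_iff atLeastLessThan_iff le_trans
    less_imp_le_nat Suc_leI sum.cong)

lemma binrep_single:
  "binrep (Suc d) n (Suc d) a \<longleftrightarrow> Suc d \<le> a (Suc d) \<and> n = a (Suc d) choose Suc d"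
  unfolding binrep_def by auto

lemma binrep_Suc_iff:
  assumes "s \<le> d"
  shows "binrep (Suc d) n s a \<longleftrightarrow>
    a (Suc d) choose Suc d \<le> n \<and> a d < a (Suc d) \<and> binrep d (n - (a (Suc d) choose Suc d)) s a"
  using assms by (auto simp: binrep_def less_Suc_eq)

lemma binrep_bracket:
  "binrep e n s a \<Longrightarrow> e \<le> a e \<and> a e choose e \<le> n \<and> n < Suc (a e) choose e"
proof (induction e arbitrary: n)
  case 0
  then show ?case by (auto simp: binrep_def)
next
  case (Suc d)
  show ?case
  proof (cases "s = Suc d")
    case True
    then show ?thesis using Suc.prems by (auto simp: binrep_single)
  next
    case False
    then have "s \<le> d" using Suc.prems by (simp add: binrep_def)
    with Suc.prems have top: "a (Suc d) choose Suc d \<le> n" "a d < a (Suc d)"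
      and tail: "binrep d (n - (a (Suc d) choose Suc d)) s a" by (auto simp: binrep_Suc_iff)
    from Suc.IH[OF tail] have "d \<le> a d" "n - (a (Suc d) choose Suc d) < Suc (a d) choose d"
      by auto
    moreover have "Suc (a d) choose d \<le> a (Suc d) choose d"
      using top(2) by (intro binomial_right_mono) simp
    ultimately show ?thesis using top by simp
  qed
qed

lemma binrep_inc_sum:
  "binrep e n s a \<Longrightarrow> (\<Sum>i=s..e. (a i + 1) choose i) = n + inc_excess e n"
proof (induction e arbitrary: n)
  case 0
  then show ?case by (simp add: binrep_def)
next
  case (Suc d)
  let ?n' = "n - (a (Suc d) choose Suc d)"
  have bracket: "Suc d \<le> a (Suc d)" "a (Suc d) choose Suc d \<le> n" "n < Suc (a (Suc d)) choose Suc d"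
    using binrep_bracket[OF Suc.prems] by auto
  moreover have "0 < a (Suc d) choose Suc d" using bracket(1) by (rule zero_less_binomial)
  ultimately have excess: "inc_excess (Suc d) n = (a (Suc d) choose d) + inc_excess d ?n'"
    by (intro inc_excess_Suc_eq) linarith+
  show ?case
  proof (cases "s = Suc d")
    case True
    then show ?thesis using Suc.prems excess by (simp add: binrep_single)
  next
    case False
    then have "s \<le> d" using Suc.prems by (simp add: binrep_def)
    with Suc.prems have "binrep d ?n' s a" by (simp add: binrep_Suc_iff)
    from Suc.IH[OF this] \<open>s \<le> d\<close> bracket(2) excess show ?thesis
      by simp
  qed
qed

lemma binrep_exists: "1 \<le> n \<Longrightarrow> \<exists>s a. binrep (Suc d) n s a"
proof (induction d arbitrary: n)
  case 0
  then show ?case by (intro exI[of _ 1] exI[of _ "\<lambda>_. n"]) (simp add: binrep_single)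
next
  case (Suc d)
  obtain t where t: "t choose Suc (Suc d) \<le> n" "n < Suc t choose Suc (Suc d)" "Suc (Suc d) \<le> t"
    using binomial_bracket[OF Suc.prems] .
  define r where "r = n - (t choose Suc (Suc d))"
  show ?case
  proof (cases "r = 0")
    case True
    then have "binrep (Suc (Suc d)) n (Suc (Suc d)) (\<lambda>_. t)"
      using t by (simp add: binrep_single r_def)
    then show ?thesis by blast
  next
    case False
    then obtain s a where rep: "binrep (Suc d) r s a" using Suc.IH[of r] by auto
    then have "s \<le> Suc d" by (simp add: binrep_def)
    have "a (Suc d) choose Suc d \<le> r" using binrep_bracket[OF rep] by simp
    moreover have "r < t choose Suc d" using t by (simp add: r_def)
    ultimately have "a (Suc d) < t" using binomial_right_mono[of t "a (Suc d)" "Suc d"] by linarith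
    moreover have "binrep (Suc d) r s (a(Suc (Suc d) := t))" using rep by (subst binrep_cong) auto
    ultimately have "binrep (Suc (Suc d)) n s (a(Suc (Suc d) := t))"
      using \<open>s \<le> Suc d\<close> t by (simp add: binrep_Suc_iff r_def)
    then show ?thesis by blast
  qed
qed

text \<open>Every representation gives the same sum.\<close>
lemma IncBin_eq: "IncBin (Suc d) n = n + inc_excess (Suc d) n"
proof (cases "n = 0")
  case False
  then obtain s a where rep: "binrep (Suc d) n s a" using binrep_exists[of n d] by auto
  have "(THE v. \<exists>s a. binrep (Suc d) n s a \<and> v = (\<Sum>i=s..Suc d. (a i + 1) choose i))
          = n + inc_excess (Suc d) n"
  proof (rule the_equality)
    show "\<exists>s a. binrep (Suc d) n s a \<and> n + inc_excess (Suc d) n = (\<Sum>i=s..Suc d. (a i + 1) choose i)"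
      using rep binrep_inc_sum[OF rep] by metis
  qed (metis binrep_inc_sum)
  then show ?thesis using False by (simp add: IncBin_def)
qed (simp add: IncBin_def)

section \<open>Compressing the fibres of a set of pairs\<close>

definition fibre :: "(nat \<times> 'y) set \<Rightarrow> 'y \<Rightarrow> nat set" where
  "fibre S y = {h. (h, y) \<in> S}"

definition compress :: "(nat \<times> 'y) set \<Rightarrow> (nat \<times> 'y) set" where
  "compress S = {(h, y). h < card (fibre S y)}"

definition grow :: "(nat \<times> ('y \<Rightarrow> 'y)) set \<Rightarrow> (nat \<times> 'y) set \<Rightarrow> (nat \<times> 'y) set" where
  "grow T S = S \<union> (\<Union>(h, y)\<in>S. (\<lambda>(d, t). (h + d, t y)) ` T)"

definition admissible_steps :: "(nat \<times> ('y \<Rightarrow> 'y)) set \<Rightarrow> bool" where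
  "admissible_steps T \<longleftrightarrow> (\<forall>(d, t)\<in>T. d \<le> 1) \<and> (\<forall>t. (1, t) \<in> T \<longrightarrow> t = id \<or> (0, t) \<in> T)"

lemma finite_fibre: "finite S \<Longrightarrow> finite (fibre S y)"
  by (rule finite_subset[of _ "fst ` S"]) (force simp: fibre_def)+

lemma sum_over_fibres:
  assumes "finite X"
  shows "(\<Sum>x\<in>X. f x) = (\<Sum>y\<in>snd ` X. \<Sum>h\<in>fibre X y. f (h, y))"
proof -
  have "(\<Sum>x\<in>X. f x) = (\<Sum>y\<in>snd ` X. \<Sum>x\<in>{x\<in>X. snd x = y}. f x)"
    using assms by (intro sum.group[symmetric]) auto
  also have "\<dots> = (\<Sum>y\<in>snd ` X. \<Sum>h\<in>fibre X y. f (h, y))"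
  proof (intro sum.cong refl)
    fix y
    have "{x\<in>X. snd x = y} = (\<lambda>h. (h, y)) ` fibre X y" by (force simp: fibre_def)
    then show "(\<Sum>x\<in>{x\<in>X. snd x = y}. f x) = (\<Sum>h\<in>fibre X y. f (h, y))"
      by (simp add: sum.reindex inj_on_def)
  qed
  finally show ?thesis .
qed

lemma card_over_fibres: "finite X \<Longrightarrow> card X = (\<Sum>y\<in>snd ` X. card (fibre X y))"
  unfolding card_eq_sum by (rule sum_over_fibres)

lemma fibre_compress: "fibre (compress S) y = {..<card (fibre S y)}"
  by (auto simp: fibre_def compress_def)

lemma snd_compress:
  assumes "finite S"
  shows "snd ` compress S = snd ` S"
proof -
  have "y \<in> snd ` compress S \<longleftrightarrow> 0 < card (fibre S y)" for y
    by (force simp: compress_def)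
  then have "y \<in> snd ` compress S \<longleftrightarrow> fibre S y \<noteq> {}" for y
    using finite_fibre[OF assms, of y] by auto
  moreover have "y \<in> snd ` S \<longleftrightarrow> fibre S y \<noteq> {}" for y
    by (force simp: fibre_def)
  ultimately show ?thesis by blast
qed

lemma finite_compress:
  assumes "finite S"
  shows "finite (compress S)"
proof (rule finite_subset)
  show "compress S \<subseteq> (\<Union>y\<in>snd ` S. (\<lambda>h. (h, y)) ` {..<card (fibre S y)})"
    using snd_compress[OF assms] by (force simp: compress_def)
qed (use assms in simp)

lemma card_compress:
  assumes "finite S"
  shows "card (compress S) = card S"
  using card_over_fibres[OF finite_compress[OF assms]] card_over_fibres[OF assms]
    snd_compress[OF assms] by (simp add: fibre_compress)

lemma sum_lessThan_card_le: "finite P \<Longrightarrow> \<Sum>{..<card P} \<le> \<Sum>(P :: nat set)"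
proof (induction "card P" arbitrary: P)
  case (Suc m)
  define M where "M = Max P"
  have "P \<noteq> {}" using Suc.hyps(2) by auto
  then have M: "M \<in> P" "P \<subseteq> {..M}" using Suc.prems by (auto simp: M_def)
  then have "Suc m \<le> Suc M" using card_mono[of "{..M}" P] Suc.hyps(2) by simp
  moreover have "card (P - {M}) = m" using Suc.hyps(2) Suc.prems M(1) by simp
  then have "\<Sum>{..<m} \<le> \<Sum>(P - {M})" using Suc.hyps(1) Suc.prems by auto
  moreover have "\<Sum>P = M + \<Sum>(P - {M})" using Suc.prems M(1) by (simp add: sum.remove)
  ultimately show ?case by (simp flip: Suc.hyps(2))
qed simp

lemma sum_lessThan_card_less:
  assumes "finite P" "Suc h \<in> P" "h \<notin> P"
  shows "\<Sum>{..<card P} < \<Sum>(P :: nat set)"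
proof -
  let ?P' = "insert h (P - {Suc h})"
  have fin: "finite (P - {Suc h})" and h: "h \<notin> P - {Suc h}" using assms by auto
  have "card ?P' = card P"
    using card_insert_disjoint[OF fin h] card.remove[OF assms(1,2)] by simp
  then have "\<Sum>{..<card P} \<le> \<Sum>?P'" using sum_lessThan_card_le[of ?P'] fin by simp
  also have "\<Sum>?P' = h + \<Sum>(P - {Suc h})" using sum.insert[OF fin h] .
  also have "\<dots> < \<Sum>P" using sum.remove[OF assms(1,2), of "\<lambda>x. x"] by simp
  finally show ?thesis .
qed

lemma sum_fst_compress_less:
  assumes "finite S" "(Suc h, y) \<in> S" "(h, y) \<notin> S"
  shows "(\<Sum>x\<in>compress S. fst x) < (\<Sum>x\<in>S. fst x)"
proof -
  have "(\<Sum>x\<in>compress S. fst x) = (\<Sum>z\<in>snd ` S. \<Sum>{..<card (fibre S z)})"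
    using sum_over_fibres[OF finite_compress[OF assms(1)], of fst] snd_compress[OF assms(1)]
    by (simp add: fibre_compress)
  also have "\<dots> < (\<Sum>z\<in>snd ` S. \<Sum>(fibre S z))"
  proof (rule sum_strict_mono_ex1)
    show "\<forall>z\<in>snd ` S. \<Sum>{..<card (fibre S z)} \<le> \<Sum>(fibre S z)"
      using finite_fibre[OF assms(1)] sum_lessThan_card_le by blast
    show "\<exists>z\<in>snd ` S. \<Sum>{..<card (fibre S z)} < \<Sum>(fibre S z)"
      using assms finite_fibre[OF assms(1)]
      by (intro bexI[of _ y] sum_lessThan_card_less[of _ h]) (force simp: fibre_def)+
  qed (use assms in simp)
  also have "\<dots> = (\<Sum>x\<in>S. fst x)" using sum_over_fibres[OF assms(1), of fst] by simp
  finally show ?thesis .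
qed

lemma finite_grow: "finite S \<Longrightarrow> finite T \<Longrightarrow> finite (grow T S)"
  unfolding grow_def by (intro finite_UnI finite_UN_I) (auto simp: split_beta)

lemma mem_grow:
  "p \<in> grow T S \<longleftrightarrow> p \<in> S \<or> (\<exists>h y d t. (h, y) \<in> S \<and> (d, t) \<in> T \<and> p = (h + d, t y))"
  unfolding grow_def by fast

lemma card_Un_Suc_image:
  assumes "finite P" "P \<noteq> {}"
  shows "Suc (card P) \<le> card (P \<union> Suc ` P)"
proof -
  have "Suc (Max P) \<notin> P" using assms by (meson Max_ge Suc_n_not_le_n)
  then have "Suc (card P) = card (insert (Suc (Max P)) P)" using assms by simp
  also have "\<dots> \<le> card (P \<union> Suc ` P)" using assms by (intro card_mono) auto
  finally show ?thesis .
qed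

text \<open>For a step \<open>(1, t)\<close> both the fibre and its shift by one land in the target fibre.\<close>
lemma card_fibre_grow_ge:
  assumes "finite (grow T S)" "(d, t) \<in> T" "fibre S y \<noteq> {}" and "admissible_steps T"
  shows "card (fibre S y) + d \<le> card (fibre (grow T S) (t y))"
proof -
  have fin: "finite (fibre (grow T S) (t y))" using finite_fibre[OF assms(1)] .
  have along: "(\<lambda>h. h + d') ` fibre S y \<subseteq> fibre (grow T S) (t' y)" if "(d', t') \<in> T" for d' t'
    using that by (auto simp: fibre_def mem_grow)
  show ?thesis
  proof (cases "d = 0")
    case True
    then show ?thesis using card_mono[OF fin along[OF assms(2)]] by simp
  next
    case False
    then have d: "d = 1" using assms(2,4) by (auto simp: admissible_steps_def)
    have "fibre S y \<subseteq> fibre (grow T S) (t y)"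
    proof (cases "t = id")
      case False
      then have "(0, t) \<in> T" using assms(2,4) d by (auto simp: admissible_steps_def)
      then show ?thesis using along[of 0 t] by simp
    qed (auto simp: fibre_def mem_grow)
    with along[OF assms(2)] d have sub: "fibre S y \<union> Suc ` fibre S y \<subseteq> fibre (grow T S) (t y)"
      by auto
    have "finite S" using assms(1) by (rule finite_subset[rotated]) (auto simp: mem_grow)
    then have "Suc (card (fibre S y)) \<le> card (fibre S y \<union> Suc ` fibre S y)"
      using card_Un_Suc_image[OF finite_fibre assms(3)] by blast
    also have "\<dots> \<le> card (fibre (grow T S) (t y))" using card_mono[OF fin sub] .
    finally show ?thesis using d by simp
  qed
qed

lemma card_grow_compress_le:
  assumes "finite S" "finite T" "admissible_steps T"
  shows "card (grow T (compress S)) \<le> card (grow T S)"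
proof -
  let ?G = "grow T S" and ?G' = "grow T (compress S)"
  have fin: "finite ?G" "finite ?G'" using assms finite_compress by (auto intro: finite_grow)
  have fibre_sub: "fibre ?G' z \<subseteq> {..<card (fibre ?G z)}" for z
  proof
    fix h assume "h \<in> fibre ?G' z"
    then consider "h < card (fibre S z)"
      | h0 y d t where "h0 < card (fibre S y)" "(d, t) \<in> T" "h = h0 + d" "z = t y"
      unfolding fibre_def mem_grow compress_def by blast
    then show "h \<in> {..<card (fibre ?G z)}"
    proof cases
      case 1
      have "card (fibre S z) \<le> card (fibre ?G z)"
        by (rule card_mono[OF finite_fibre[OF fin(1)]]) (auto simp: fibre_def mem_grow)
      with 1 show ?thesis by simp
    next
      case 2
      then have "fibre S y \<noteq> {}" by auto
      from card_fibre_grow_ge[OF fin(1) 2(2) this assms(3)] 2 show ?thesis by simp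
    qed
  qed
  then have fibre_le: "card (fibre ?G' z) \<le> card (fibre ?G z)" for z
    using card_mono[of "{..<card (fibre ?G z)}"] by (metis card_lessThan finite_lessThan)
  have "snd ` ?G' \<subseteq> snd ` ?G"
  proof
    fix z assume "z \<in> snd ` ?G'"
    then obtain h where "h \<in> fibre ?G' z" by (auto simp: fibre_def)
    then have "fibre ?G z \<noteq> {}" using fibre_sub[of z] by auto
    then show "z \<in> snd ` ?G" by (auto simp: fibre_def intro: rev_image_eqI)
  qed
  then have "card ?G' \<le> (\<Sum>z\<in>snd ` ?G. card (fibre ?G' z))"
    using card_over_fibres[OF fin(2)] fin(1) by (simp add: sum_mono2)
  also have "\<dots> \<le> (\<Sum>z\<in>snd ` ?G. card (fibre ?G z))" using fibre_le by (intro sum_mono)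
  also have "\<dots> = card ?G" using card_over_fibres[OF fin(1)] by simp
  finally show ?thesis .
qed

lemma compress_subset:
  assumes "finite S" "S \<subseteq> R" and down: "\<And>h h' y. (h, y) \<in> R \<Longrightarrow> h' \<le> h \<Longrightarrow> (h', y) \<in> R"
  shows "compress S \<subseteq> R"
proof
  fix p assume "p \<in> compress S"
  then obtain h y where p: "p = (h, y)" "h < card (fibre S y)" by (auto simp: compress_def)
  have "\<exists>h'\<in>fibre S y. h \<le> h'"
  proof (rule ccontr)
    assume "\<not> (\<exists>h'\<in>fibre S y. h \<le> h')"
    then have "fibre S y \<subseteq> {..<h}" by auto
    then show False using p(2) card_mono[of "{..<h}" "fibre S y"] by simp
  qed
  then show "p \<in> R" using assms(2) down p(1) by (auto simp: fibre_def)
qed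

section \<open>The upward step of a set of lattice points and its shears\<close>

definition incr_at :: "nat \<Rightarrow> nat list \<Rightarrow> nat list" where
  "incr_at i b = b[i := Suc (b ! i)]"

definition up_step :: "nat list set \<Rightarrow> nat list set" where
  "up_step B = B \<union> (\<Union>b\<in>B. (\<lambda>i. incr_at i b) ` {..<length b})"

lemma length_incr_at [simp]: "length (incr_at i b) = length b"
  by (simp add: incr_at_def)

lemma inj_incr_at: "inj (incr_at i)"
proof (rule injI)
  fix x y assume eq: "incr_at i x = incr_at i y"
  then have len: "length x = length y" by (metis length_incr_at)
  have "x ! k = y ! k" if "k < length x" for k
    using arg_cong[OF eq, of "\<lambda>b. b ! k"] that len
    by (cases "k = i") (auto simp: incr_at_def nth_list_update)
  with len show "x = y" by (rule nth_equalityI)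
qed

lemma length_up_step: "\<forall>b\<in>B. length b = e \<Longrightarrow> b \<in> up_step B \<Longrightarrow> length b = e"
  by (auto simp: up_step_def)

lemma finite_up_step: "finite B \<Longrightarrow> finite (up_step B)"
  by (simp add: up_step_def)

text \<open>The shear \<open>shear j\<close> maps the lines of \<open>\<nat>\<^sup>1\<^sup>+\<^sup>e\<close> in direction \<open>e\<^sub>0\<close> (for \<open>j = None\<close>)
  or \<open>e\<^sub>0 - e\<^sub>i\<^sub>+\<^sub>1\<close> (for \<open>j = Some i\<close>) onto the fibres \<open>{(h, y) | h}\<close>, so that \<open>compress\<close>
  pushes a set of vectors down along that direction.\<close>
fun shear_tail :: "nat option \<Rightarrow> nat \<Rightarrow> nat list \<Rightarrow> nat list" where
  "shear_tail None h c = c"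
| "shear_tail (Some i) h c = c[i := c ! i + h]"

fun unshear_tail :: "nat option \<Rightarrow> nat \<Rightarrow> nat list \<Rightarrow> nat list" where
  "unshear_tail None h y = y"
| "unshear_tail (Some i) h y = y[i := y ! i - h]"

definition shear :: "nat option \<Rightarrow> nat list \<Rightarrow> nat \<times> nat list" where
  "shear j b = (hd b, shear_tail j (hd b) (tl b))"

definition unshear :: "nat option \<Rightarrow> nat \<times> nat list \<Rightarrow> nat list" where
  "unshear j p = fst p # unshear_tail j (fst p) (snd p)"

text \<open>On \<open>shear_range\<close> the truncated subtraction in \<open>unshear\<close> is exact.\<close>
definition shear_range :: "nat \<Rightarrow> nat option \<Rightarrow> (nat \<times> nat list) set" where
  "shear_range e j = {(h, y). length y = e \<and> (\<forall>i\<in>set_option j. h \<le> y ! i)}"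

definition shear_steps :: "nat \<Rightarrow> nat option \<Rightarrow> (nat \<times> (nat list \<Rightarrow> nat list)) set" where
  "shear_steps e j = insert (1, case j of None \<Rightarrow> id | Some i \<Rightarrow> incr_at i)
     ((\<lambda>k. (0, incr_at k)) ` {..<e})"

lemma fst_shear [simp]: "fst (shear j b) = hd b"
  by (simp add: shear_def)

lemma shear_in_range:
  "length b = Suc e \<Longrightarrow> set_option j \<subseteq> {..<e} \<Longrightarrow> shear j b \<in> shear_range e j"
  by (cases b; cases j) (auto simp: shear_def shear_range_def)

lemma unshear_shear:
  "length b = Suc e \<Longrightarrow> set_option j \<subseteq> {..<e} \<Longrightarrow> unshear j (shear j b) = b"
  by (cases b; cases j) (auto simp: shear_def unshear_def)

lemma
  assumes "p \<in> shear_range e j" "set_option j \<subseteq> {..<e}"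
  shows shear_unshear: "shear j (unshear j p) = p"
    and length_unshear: "length (unshear j p) = Suc e"
  using assms by (cases p; cases j; auto simp: shear_def unshear_def shear_range_def)+

lemma inj_on_shear:
  "set_option j \<subseteq> {..<e} \<Longrightarrow> \<forall>b\<in>B. length b = Suc e \<Longrightarrow> inj_on (shear j) B"
  by (rule inj_on_inverseI[where g = "unshear j"]) (simp add: unshear_shear)

lemma shear_incr_at_0:
  assumes "set_option j \<subseteq> {..<length c}"
  shows "shear j (incr_at 0 (h # c))
           = (Suc h, (case j of None \<Rightarrow> id | Some i \<Rightarrow> incr_at i) (snd (shear j (h # c))))"
  using assms by (cases j) (auto simp: shear_def incr_at_def)

lemma shear_incr_at_Suc:
  assumes "set_option j \<subseteq> {..<length c}" "k < length c"
  shows "shear j (incr_at (Suc k) (h # c)) = (h, incr_at k (snd (shear j (h # c))))"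
  using assms
  by (cases j) (auto simp: shear_def incr_at_def list_update_swap nth_list_update)

lemma shear_incr_at_image:
  assumes "length b = Suc e" "set_option j \<subseteq> {..<e}"
  shows "(\<lambda>i. shear j (incr_at i b)) ` {..<Suc e}
           = (\<lambda>(d, t). (hd b + d, t (snd (shear j b)))) ` shear_steps e j"
proof -
  obtain h c where b: "b = h # c" "length c = e" using assms(1) by (cases b) auto
  have "(\<lambda>k. shear j (incr_at (Suc k) b)) ` {..<e} = (\<lambda>k. (h, incr_at k (snd (shear j b)))) ` {..<e}"
    using assms(2) b by (intro image_cong) (simp_all add: shear_incr_at_Suc)
  then show ?thesis using assms(2) b
    by (simp add: lessThan_Suc_eq_insert_0 image_image shear_steps_def shear_incr_at_0)
qed

lemma shear_up_step:
  assumes "\<forall>b\<in>B. length b = Suc e" "set_option j \<subseteq> {..<e}"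
  shows "shear j ` up_step B = grow (shear_steps e j) (shear j ` B)"
proof -
  have "shear j ` (\<lambda>i. incr_at i b) ` {..<length b}
          = (\<lambda>(d, t). (hd b + d, t (snd (shear j b)))) ` shear_steps e j" if "b \<in> B" for b
    using shear_incr_at_image[of b e j] assms that by (simp add: image_image)
  then show ?thesis
    by (simp add: up_step_def grow_def image_Un image_UN case_prod_beta cong: SUP_cong)
qed

lemma finite_shear_steps: "finite (shear_steps e j)"
  by (simp add: shear_steps_def)

lemma admissible_shear_steps: "set_option j \<subseteq> {..<e} \<Longrightarrow> admissible_steps (shear_steps e j)"
  by (cases j) (auto simp: shear_steps_def admissible_steps_def)

lemma mem_shear_image_iff:
  assumes "\<forall>b\<in>B. length b = Suc e" "set_option j \<subseteq> {..<e}" "p \<in> shear_range e j"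
  shows "p \<in> shear j ` B \<longleftrightarrow> unshear j p \<in> B"
  using assms unshear_shear shear_unshear by (metis image_eqI imageE)

lemma card_up_step_eq_card_grow:
  assumes "\<forall>b\<in>B. length b = Suc e" "set_option j \<subseteq> {..<e}"
  shows "card (up_step B) = card (grow (shear_steps e j) (shear j ` B))"
proof -
  have "inj_on (shear j) (up_step B)"
    using assms length_up_step[OF assms(1)] by (intro inj_on_shear) auto
  then show ?thesis using shear_up_step[OF assms] card_image by metis
qed

definition compression :: "nat option \<Rightarrow> nat list set \<Rightarrow> nat list set" where
  "compression j B = unshear j ` compress (shear j ` B)"

context
  fixes B :: "nat list set" and e :: nat and j :: "nat option"
  assumes fin: "finite B" and len: "\<forall>b\<in>B. length b = Suc e" and dir: "set_option j \<subseteq> {..<e}"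
begin

lemma compress_shear_in_range: "compress (shear j ` B) \<subseteq> shear_range e j"
proof (rule compress_subset)
  show "shear j ` B \<subseteq> shear_range e j" using len dir shear_in_range by blast
qed (use fin in \<open>auto simp: shear_range_def\<close>)

lemma shear_compression: "shear j ` compression j B = compress (shear j ` B)"
  using compress_shear_in_range dir
  by (force simp: compression_def image_image shear_unshear intro: rev_image_eqI)

lemma length_compression: "\<forall>b\<in>compression j B. length b = Suc e"
  using compress_shear_in_range dir by (auto simp: compression_def length_unshear)

lemma finite_compression: "finite (compression j B)"
  using fin by (simp add: compression_def finite_compress)

lemma card_compression: "card (compression j B) = card B"
proof -
  have "card (compression j B) = card (shear j ` compression j B)"
    using inj_on_shear[OF dir length_compression] card_image by metis
  also have "\<dots> = card (shear j ` B)" using fin by (simp add: shear_compression card_compress)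
  also have "\<dots> = card B" using inj_on_shear[OF dir len] card_image by metis
  finally show ?thesis .
qed

lemma card_up_step_compression_le: "card (up_step (compression j B)) \<le> card (up_step B)"
  using card_up_step_eq_card_grow[OF len dir] card_up_step_eq_card_grow[OF length_compression dir]
    card_grow_compress_le[OF _ finite_shear_steps admissible_shear_steps[OF dir]] fin
  by (simp add: shear_compression)

lemma sum_hd_compression_less:
  assumes "(Suc h, y) \<in> shear j ` B" "(h, y) \<notin> shear j ` B"
  shows "(\<Sum>b\<in>compression j B. hd b) < (\<Sum>b\<in>B. hd b)"
proof -
  have sum_hd: "(\<Sum>b\<in>C. hd b) = (\<Sum>p\<in>shear j ` C. fst p)" if "\<forall>b\<in>C. length b = Suc e" for C
    using inj_on_shear[OF dir that] by (simp add: sum.reindex)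
  show ?thesis
    using sum_hd[OF len] sum_hd[OF length_compression] sum_fst_compress_less[OF _ assms] fin
    by (simp add: shear_compression)
qed

end

definition compressed :: "nat list set \<Rightarrow> bool" where
  "compressed B \<longleftrightarrow> (\<forall>h c. Suc h # c \<in> B \<longrightarrow> h # c \<in> B \<and> (\<forall>i<length c. h # incr_at i c \<in> B))"

lemma not_compressed_gap:
  assumes len: "\<forall>b\<in>B. length b = Suc e" and "\<not> compressed B"
  obtains j h y where "set_option j \<subseteq> {..<e}" "(Suc h, y) \<in> shear j ` B" "(h, y) \<notin> shear j ` B"
proof -
  obtain h c where hc: "Suc h # c \<in> B"
    and gap: "h # c \<notin> B \<or> (\<exists>i<length c. h # incr_at i c \<notin> B)"
    using assms(2) by (auto simp: compressed_def)
  have c: "length c = e" using len hc by force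
  from gap show thesis
  proof (elim disjE exE conjE)
    assume "h # c \<notin> B"
    moreover have "(h, c) \<in> shear_range e None" using c by (simp add: shear_range_def)
    ultimately have "(h, c) \<notin> shear None ` B"
      using mem_shear_image_iff[OF len] by (simp add: unshear_def)
    moreover have "(Suc h, c) \<in> shear None ` B" using hc by (force simp: shear_def)
    ultimately show thesis using that[of None] by simp
  next
    fix i assume i: "i < length c" and "h # incr_at i c \<notin> B"
    moreover define y where "y = c[i := c ! i + Suc h]"
    moreover have "(h, y) \<in> shear_range e (Some i)" using c i by (simp add: shear_range_def y_def)
    ultimately have "(h, y) \<notin> shear (Some i) ` B"
      using mem_shear_image_iff[OF len] c by (simp add: unshear_def incr_at_def)
    moreover have "(Suc h, y) \<in> shear (Some i) ` B" using hc by (force simp: shear_def y_def)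
    ultimately show thesis using that[of "Some i"] i c by simp
  qed
qed

section \<open>A lower bound for the upward step\<close>

definition bottom_layer :: "nat list set \<Rightarrow> nat list set" where
  "bottom_layer B = {c. 0 # c \<in> B}"

definition shift_down :: "nat list set \<Rightarrow> nat list set" where
  "shift_down B = {h # c | h c. Suc h # c \<in> B}"

lemma incr_at_0_Cons [simp]: "incr_at 0 (h # c) = Suc h # c"
  by (simp add: incr_at_def)

lemma incr_at_Suc_Cons [simp]: "incr_at (Suc i) (h # c) = h # incr_at i c"
  by (simp add: incr_at_def)

lemma
  assumes "[] \<notin> B"
  shows bij_betw_bottom_layer: "bij_betw (Cons 0) (bottom_layer B) {b\<in>B. hd b = 0}"
    and bij_betw_shift_down: "bij_betw (incr_at 0) (shift_down B) {b\<in>B. hd b \<noteq> 0}"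
proof -
  have Cons_hd: "b = hd b # tl b" if "b \<in> B" for b
    using that assms by (cases b) auto
  have "Cons 0 ` bottom_layer B = {b\<in>B. hd b = 0}"
  proof (intro equalityI subsetI)
    fix b assume "b \<in> {b\<in>B. hd b = 0}"
    then have "b = 0 # tl b" "tl b \<in> bottom_layer B"
      using Cons_hd[of b] by (auto simp: bottom_layer_def)
    then show "b \<in> Cons 0 ` bottom_layer B" by (rule image_eqI)
  qed (auto simp: bottom_layer_def)
  then show "bij_betw (Cons 0) (bottom_layer B) {b\<in>B. hd b = 0}" by (simp add: bij_betw_def)
  have "incr_at 0 ` shift_down B = {b\<in>B. hd b \<noteq> 0}"
  proof (intro equalityI subsetI)
    fix b assume b: "b \<in> {b\<in>B. hd b \<noteq> 0}"
    then obtain h where h: "hd b = Suc h" by (auto simp: gr0_conv_Suc)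
    with b have "b = incr_at 0 (h # tl b)" "h # tl b \<in> shift_down B"
      using Cons_hd[of b] by (auto simp: shift_down_def)
    then show "b \<in> incr_at 0 ` shift_down B" by (rule image_eqI)
  qed (auto simp: shift_down_def)
  moreover have "inj_on (incr_at 0) (shift_down B)" by (rule inj_on_subset[OF inj_incr_at]) simp
  ultimately show "bij_betw (incr_at 0) (shift_down B) {b\<in>B. hd b \<noteq> 0}" by (simp add: bij_betw_def)
qed

lemma
  assumes "finite B" "[] \<notin> B"
  shows finite_bottom_layer: "finite (bottom_layer B)"
    and finite_shift_down: "finite (shift_down B)"
    and card_bottom_layer_shift_down: "card B = card (bottom_layer B) + card (shift_down B)"
proof -
  show "finite (bottom_layer B)" "finite (shift_down B)"
    using bij_betw_finite[OF bij_betw_bottom_layer] bij_betw_finite[OF bij_betw_shift_down] assms by auto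
  have "card B = card ({b\<in>B. hd b = 0} \<union> {b\<in>B. hd b \<noteq> 0})"
    by (rule arg_cong[where f = card]) auto
  also have "\<dots> = card {b\<in>B. hd b = 0} + card {b\<in>B. hd b \<noteq> 0}"
    by (rule card_Un_disjoint) (use assms(1) in auto)
  finally show "card B = card (bottom_layer B) + card (shift_down B)"
    using bij_betw_same_card[OF bij_betw_bottom_layer] bij_betw_same_card[OF bij_betw_shift_down] assms
    by simp
qed

lemma up_step_shift_down_subset: "compressed B \<Longrightarrow> up_step (shift_down B) \<subseteq> B"
  by (auto simp: up_step_def shift_down_def compressed_def less_Suc_eq_0_disj)

lemma bottom_layer_nonempty:
  assumes "compressed B" "h # c \<in> B"
  shows "c \<in> bottom_layer B"
  using assms(2) by (induction h) (use assms(1) in \<open>auto simp: compressed_def bottom_layer_def\<close>)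

lemma card_up_step_ge_bottom_layer:
  assumes "finite B" "[] \<notin> B"
  shows "card B + card (up_step (bottom_layer B)) \<le> card (up_step B)"
proof -
  let ?U = "incr_at 0 ` B \<union> Cons 0 ` up_step (bottom_layer B)"
  have "hd (incr_at 0 b) \<noteq> 0" if "b \<in> B" for b
    using that assms(2) by (cases b) auto
  then have "incr_at 0 ` B \<inter> Cons 0 ` up_step (bottom_layer B) = {}" by fastforce
  then have "card B + card (up_step (bottom_layer B)) = card ?U"
    using finite_up_step[OF finite_bottom_layer[OF assms]] assms(1)
      inj_on_subset[OF inj_incr_at, of B 0]
    by (simp add: card_Un_disjoint card_image)
  also have "\<dots> \<le> card (up_step B)"
  proof (rule card_mono[OF finite_up_step[OF assms(1)]])
    have "incr_at 0 ` B \<subseteq> up_step B" using assms(2) by (force simp: up_step_def)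
    moreover have "Cons 0 ` up_step (bottom_layer B) \<subseteq> up_step B"
    proof
      fix z assume "z \<in> Cons 0 ` up_step (bottom_layer B)"
      then consider c where "0 # c \<in> B" "z = 0 # c"
        | c i where "0 # c \<in> B" "i < length c" "z = incr_at (Suc i) (0 # c)"
        by (auto simp: up_step_def bottom_layer_def)
      then show "z \<in> up_step B" by cases (force simp: up_step_def)+
    qed
    ultimately show "?U \<subseteq> up_step B" by blast
  qed
  finally show ?thesis .
qed

text \<open>With \<open>x\<close> the size of the bottom layer and \<open>y\<close> that of \<open>shift_down B\<close>, compressedness
  gives \<open>y + inc_excess (Suc e) y \<le> card B = x + y\<close>, the hypothesis of \<open>inc_excess_add_le\<close>.\<close>
lemma card_up_step_ge_compressed:
  assumes IH_dim: "\<And>C. finite C \<Longrightarrow> \<forall>c\<in>C. length c = e \<Longrightarrow>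
      card C + inc_excess e (card C) \<le> card (up_step C)"
    and IH_card: "\<And>C. finite C \<Longrightarrow> \<forall>c\<in>C. length c = Suc e \<Longrightarrow> card C < card B \<Longrightarrow>
      card C + inc_excess (Suc e) (card C) \<le> card (up_step C)"
    and B: "finite B" "\<forall>b\<in>B. length b = Suc e" "compressed B"
  shows "card B + inc_excess (Suc e) (card B) \<le> card (up_step B)"
proof (cases "B = {}")
  case False
  have Nil: "[] \<notin> B" using B(2) by auto
  let ?x = "card (bottom_layer B)" and ?y = "card (shift_down B)"
  have card_B: "card B = ?x + ?y" using card_bottom_layer_shift_down[OF B(1) Nil] .
  obtain h c where "h # c \<in> B" using False B(2) by (metis Suc_length_conv all_not_in_conv)
  then have "bottom_layer B \<noteq> {}" using bottom_layer_nonempty[OF B(3)] by blast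
  then have "0 < ?x" using finite_bottom_layer[OF B(1) Nil] by (simp add: card_gt_0_iff)
  then have "?y + inc_excess (Suc e) ?y \<le> card (up_step (shift_down B))"
    using B(2) card_B by (intro IH_card finite_shift_down[OF B(1) Nil]) (auto simp: shift_down_def)
  also have "\<dots> \<le> card B"
    using up_step_shift_down_subset[OF B(3)] B(1) by (rule card_mono[rotated])
  finally have "inc_excess (Suc e) ?y \<le> ?x" using card_B by simp
  then have "inc_excess (Suc e) (card B) \<le> ?x + inc_excess e ?x"
    using inc_excess_add_le card_B by simp
  also have "\<dots> \<le> card (up_step (bottom_layer B))"
    using B(2) by (intro IH_dim finite_bottom_layer[OF B(1) Nil]) (auto simp: bottom_layer_def)
  finally show ?thesis using card_up_step_ge_bottom_layer[OF B(1) Nil] by simp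
qed simp

theorem card_up_step_ge:
  "finite B \<Longrightarrow> \<forall>b\<in>B. length b = e \<Longrightarrow> card B + inc_excess e (card B) \<le> card (up_step B)"
proof (induction e arbitrary: B)
  case 0
  then have "up_step B = B" by (auto simp: up_step_def)
  then show ?case by simp
next
  case (Suc e)
  from Suc.prems show ?case
  proof (induction "(card B, \<Sum>b\<in>B. hd b)" arbitrary: B rule: less_induct)
    case less
    show ?case
    proof (cases "compressed B")
      case True
      show ?thesis
        using less.hyps by (intro card_up_step_ge_compressed[OF Suc.IH _ less.prems True]) auto
    next
      case False
      then obtain j h y where dir: "set_option j \<subseteq> {..<e}"
        and gap: "(Suc h, y) \<in> shear j ` B" "(h, y) \<notin> shear j ` B"
        using not_compressed_gap[OF less.prems(2)] by blast
      note compression = finite_compression length_compression card_compression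
        card_up_step_compression_le sum_hd_compression_less
      have "card B + inc_excess (Suc e) (card B) \<le> card (up_step (compression j B))"
        using less.hyps[of "compression j B"] compression[OF less.prems dir] gap by simp
      then show ?thesis using compression(4)[OF less.prems dir] by simp
    qed
  qed
qed

section \<open>Gap vectors\<close>

text \<open>A \<open>d\<close>-subset \<open>u\<^sub>1 < \<dots> < u\<^sub>d\<close> of \<open>\<nat>\<close> is encoded by its gap vector
  \<open>(u\<^sub>1 - 1, u\<^sub>2 - u\<^sub>1 - 1, \<dots>, u\<^sub>d - u\<^sub>d\<^sub>-\<^sub>1 - 1)\<close>; an \<open>Inc\<^sub>1\<close> map then increases a single gap.\<close>
fun gap_set :: "nat list \<Rightarrow> nat set" where
  "gap_set [] = {}"
| "gap_set (t # c) = insert (Suc t) ((\<lambda>x. x + Suc t) ` gap_set c)"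

lemma gap_set_pos: "x \<in> gap_set b \<Longrightarrow> 0 < x"
  by (induction b arbitrary: x) auto

lemma finite_gap_set [simp]: "finite (gap_set b)"
  by (induction b) auto

lemma card_gap_set [simp]: "card (gap_set b) = length b"
proof (induction b)
  case (Cons t c)
  have "Suc t \<notin> (\<lambda>x. x + Suc t) ` gap_set c" using gap_set_pos[of _ c] by force
  then show ?case using Cons by (simp add: card_image inj_on_def)
qed simp

lemma Min_gap_set: "gap_set (t # c) \<noteq> {} \<and> Min (gap_set (t # c)) = Suc t"
  by (auto intro: Min_eqI)

lemma inj_gap_set: "inj gap_set"
proof (rule injI)
  fix b b' :: "nat list" assume "gap_set b = gap_set b'"
  then show "b = b'"
  proof (induction b arbitrary: b')
    case Nil
    then show ?case using card_gap_set[of b'] by auto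
  next
    case (Cons t c)
    then obtain t' c' where b': "b' = t' # c'" by (cases b') auto
    then have "t = t'" using Cons.prems Min_gap_set by (metis Suc_inject)
    have "Suc t \<notin> (\<lambda>x. x + Suc t) ` gap_set c" "Suc t \<notin> (\<lambda>x. x + Suc t) ` gap_set c'"
      using gap_set_pos by force+
    then have "(\<lambda>x. x + Suc t) ` gap_set c = (\<lambda>x. x + Suc t) ` gap_set c'"
      using Cons.prems b' \<open>t = t'\<close> by (simp add: insert_ident)
    then have "gap_set c = gap_set c'" by (simp add: inj_image_eq_iff inj_def)
    then show ?case using Cons.IH b' \<open>t = t'\<close> by simp
  qed
qed

lemma gap_set_surj: "finite u \<Longrightarrow> 0 \<notin> u \<Longrightarrow> \<exists>b. gap_set b = u"
proof (induction "card u" arbitrary: u)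
  case 0
  then show ?case by (intro exI[of _ "[]"]) simp
next
  case (Suc n)
  define m where "m = Min u"
  have m: "m \<in> u" "\<And>x. x \<in> u - {m} \<Longrightarrow> m < x"
    using Suc by (auto simp: m_def intro: Min_in dual_order.not_eq_order_implies_strict)
  define u' where "u' = (\<lambda>x. x - m) ` (u - {m})"
  have "inj_on (\<lambda>x. x - m) (u - {m})" using m(2) by (force simp: inj_on_def)
  then have "n = card u'" using Suc.hyps(2) Suc.prems m(1) by (simp add: u'_def card_image)
  moreover have "0 \<notin> u'" using m(2) by (force simp: u'_def)
  moreover have "finite u'" using Suc.prems(1) by (simp add: u'_def)
  ultimately obtain c where c: "gap_set c = u'" using Suc.hyps(1) by blast
  obtain t where t: "m = Suc t" using m(1) Suc.prems(2) by (cases m) auto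
  have "(\<lambda>x. x + m) ` u' = u - {m}"
    using m(2) by (force simp: u'_def image_image intro: rev_image_eqI)
  then have "gap_set (t # c) = u" using c t m(1) by auto
  then show ?case by blast
qed

definition skip :: "nat \<Rightarrow> nat \<Rightarrow> nat" where
  "skip k j = (if j < k then j else Suc j)"

lemma skip_Inc1: "skip k \<in> Inc1"
  unfolding Inc1_def skip_def by auto

lemma skip_less: "j < k \<Longrightarrow> skip k j = j"
  and skip_ge: "k \<le> j \<Longrightarrow> skip k j = Suc j"
  by (simp_all add: skip_def)

lemma skip_image_gap_set_Cons:
  assumes "Suc t \<le> k"
  shows "skip k ` gap_set (t # c)
           = insert (skip k (Suc t)) ((\<lambda>x. x + Suc t) ` skip (k - Suc t) ` gap_set c)"
  using assms by (auto simp: skip_def image_image intro!: image_cong)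

lemma gap_set_incr_at:
  "i < length b \<Longrightarrow> \<exists>k\<ge>1. gap_set (incr_at i b) = skip k ` gap_set b"
proof (induction b arbitrary: i)
  case (Cons t c)
  show ?case
  proof (cases i)
    case 0
    have "skip 0 = Suc" by (simp add: skip_ge fun_eq_iff)
    then have "skip (Suc t) ` gap_set (t # c) = gap_set (incr_at i (t # c))"
      using 0 skip_image_gap_set_Cons[of t "Suc t" c] by (simp add: skip_ge image_image)
    then show ?thesis by (intro exI[of _ "Suc t"]) simp
  next
    case (Suc i')
    obtain k where k: "1 \<le> k" "gap_set (incr_at i' c) = skip k ` gap_set c"
      using Cons.IH[of i'] Cons.prems Suc by auto
    then have "skip (k + Suc t) ` gap_set (t # c) = gap_set (incr_at i (t # c))"
      using Suc skip_image_gap_set_Cons[of t "k + Suc t" c] by (simp add: skip_less)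
    then show ?thesis using k(1) by (intro exI[of _ "k + Suc t"]) simp
  qed
qed simp

lemma gap_set_up_step: "gap_set ` up_step B \<subseteq> IncF (gap_set ` B)"
proof
  fix z assume "z \<in> gap_set ` up_step B"
  then consider b where "b \<in> B" "z = gap_set b"
    | b i where "b \<in> B" "i < length b" "z = gap_set (incr_at i b)"
    by (auto simp: up_step_def)
  then show "z \<in> IncF (gap_set ` B)"
  proof cases
    case 1
    have "(\<lambda>x. x) \<in> Inc1" by (simp add: Inc1_def)
    with 1 show ?thesis unfolding IncF_def by force
  next
    case 2
    then obtain k where "z = skip k ` gap_set b" using gap_set_incr_at by blast
    with 2 skip_Inc1 show ?thesis unfolding IncF_def by blast
  qed
qed

definition gap_vectors :: "nat \<Rightarrow> nat set set \<Rightarrow> nat list set" where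
  "gap_vectors d \<Delta> = {b. length b = d \<and> gap_set b \<in> \<Delta>}"

lemma finite_simplicial_complex: "simplicial_complex m \<Delta> \<Longrightarrow> finite \<Delta>"
  by (rule finite_subset[of _ "Pow {1..m}"]) (auto simp: simplicial_complex_def)

lemma finite_faces: "finite \<Delta> \<Longrightarrow> finite (faces d \<Delta>)"
  by (simp add: faces_def)

lemma faces_eq_gap_set_image:
  assumes "simplicial_complex m \<Delta>"
  shows "faces d \<Delta> = gap_set ` gap_vectors d \<Delta>"
proof (intro equalityI subsetI)
  fix u assume u: "u \<in> faces d \<Delta>"
  then have "u \<subseteq> {1..m}" using assms by (auto simp: faces_def simplicial_complex_def)
  then have "finite u" "0 \<notin> u" using finite_subset[OF _ finite_atLeastAtMost] by auto
  then obtain b where b: "gap_set b = u" using gap_set_surj by blast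
  moreover have "length b = d" using u card_gap_set[of b] by (simp add: b faces_def)
  ultimately show "u \<in> gap_set ` gap_vectors d \<Delta>" using u by (auto simp: faces_def gap_vectors_def)
qed (auto simp: faces_def gap_vectors_def)

lemma
  assumes "simplicial_complex m \<Delta>"
  shows finite_gap_vectors: "finite (gap_vectors d \<Delta>)"
    and card_gap_vectors: "card (gap_vectors d \<Delta>) = card (faces d \<Delta>)"
proof -
  have faces: "faces d \<Delta> = gap_set ` gap_vectors d \<Delta>" by (rule faces_eq_gap_set_image[OF assms])
  have inj: "inj_on gap_set (gap_vectors d \<Delta>)" by (rule inj_on_subset[OF inj_gap_set]) simp
  have "finite (faces d \<Delta>)" by (rule finite_faces[OF finite_simplicial_complex[OF assms]])
  then show "finite (gap_vectors d \<Delta>)" unfolding faces using inj by (rule finite_imageD)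
  show "card (gap_vectors d \<Delta>) = card (faces d \<Delta>)" unfolding faces using inj by (rule card_image[symmetric])
qed

lemma IncCx_subset_Pow:
  assumes "simplicial_complex m \<Delta>"
  shows "IncCx \<Delta> \<subseteq> Pow {..Suc m}"
proof
  fix z assume "z \<in> IncCx \<Delta>"
  then consider "z = {}" | d u \<pi> where "u \<in> faces d \<Delta>" "\<pi> \<in> Inc1" "z = \<pi> ` u"
    unfolding IncCx_def IncF_def by blast
  then show "z \<in> Pow {..Suc m}"
  proof cases
    case 2
    have "u \<subseteq> {1..m}" using 2 assms by (auto simp: faces_def simplicial_complex_def)
    with 2 show ?thesis by (force simp: Inc1_def)
  qed simp
qed

lemma IncF_mono: "F \<subseteq> G \<Longrightarrow> IncF F \<subseteq> IncF G"
  unfolding IncF_def by blast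

lemma card_up_step_gap_vectors_le:
  assumes "simplicial_complex m \<Delta>"
  shows "card (up_step (gap_vectors (Suc d) \<Delta>)) \<le> card (faces (Suc d) (IncCx \<Delta>))"
proof -
  let ?B = "gap_vectors (Suc d) \<Delta>"
  have "gap_set ` up_step ?B \<subseteq> IncF (gap_set ` ?B)" by (rule gap_set_up_step)
  also have "\<dots> \<subseteq> IncF (faces (Suc d) \<Delta>)"
    by (rule IncF_mono) (auto simp: faces_def gap_vectors_def)
  also have "\<dots> \<subseteq> IncCx \<Delta>" unfolding IncCx_def by (rule le_supI1, rule UN_upper) simp
  finally have in_IncCx: "gap_set ` up_step ?B \<subseteq> IncCx \<Delta>" .
  have sub: "gap_set ` up_step ?B \<subseteq> faces (Suc d) (IncCx \<Delta>)"
  proof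
    fix z assume "z \<in> gap_set ` up_step ?B"
    then obtain b where b: "b \<in> up_step ?B" "z = gap_set b" by blast
    then have "length b = Suc d" using length_up_step[of ?B "Suc d" b] by (simp add: gap_vectors_def)
    then show "z \<in> faces (Suc d) (IncCx \<Delta>)" using b in_IncCx by (auto simp: faces_def)
  qed
  have "finite (IncCx \<Delta>)" using IncCx_subset_Pow[OF assms] by (rule finite_subset) simp
  then have "card (gap_set ` up_step ?B) \<le> card (faces (Suc d) (IncCx \<Delta>))"
    using sub by (intro card_mono finite_faces)
  then show ?thesis by (simp add: card_image inj_on_subset[OF inj_gap_set])
qed

theorem corollary4p3:
  fixes m :: nat and \<Delta> :: "nat set set"
  assumes "simplicial_complex m \<Delta>"
  shows "\<forall>d. IncBin (d + 1) (fvec d \<Delta>) \<le> fvec d (IncCx \<Delta>)"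
proof
  fix d
  let ?B = "gap_vectors (Suc d) \<Delta>"
  have "IncBin (d + 1) (fvec d \<Delta>) = card ?B + inc_excess (Suc d) (card ?B)"
    using IncBin_eq card_gap_vectors[OF assms] by (simp add: fvec_def)
  also have "\<dots> \<le> card (up_step ?B)"
    using card_up_step_ge[OF finite_gap_vectors[OF assms]] by (simp add: gap_vectors_def)
  also have "\<dots> \<le> fvec d (IncCx \<Delta>)"
    using card_up_step_gap_vectors_le[OF assms] by (simp add: fvec_def)
  finally show "IncBin (d + 1) (fvec d \<Delta>) \<le> fvec d (IncCx \<Delta>)" .
qed

end
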